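(* Let $k\ge1$, $n\ge0$, let $m_1,\dots,m_k$ be nonnegative integers and $t_1,\dots,t_{k-1}$ nonnegative integers. There is a bijection between the set of $k$-marked Durfee symbols $\eta$ of $n$ with $\rho_i(\eta)=m_i$ for $1\le i\le k$ and $\mathrm{nb}_i(\eta)=t_i$ for $1\le i\le k-1$, and the set of $k$-marked strict shifted Durfee symbols $\bar\eta$ of $n$ with $\rho_i(\bar\eta)=m_i+2t_i$ for $1\le i\le k-1$ and $\rho_k(\bar\eta)=m_k$.
   Context: A partition is a finite nonincreasing sequence $\lambda=(\lambda_1,\dots,\lambda_r)$ of positive integers (possibly empty); $l(\lambda)=r$, $|\lambda|=\sum\lambda_i$, $\lambda_1$ the largest part. Let $k\ge1$. A $k$-marked Durfee symbol of $n$ is an array $\eta=\begin{pmatrix}\alpha^k,&\dots,&\alpha^1\\ \beta^k,&\dots,&\beta^1\end{pmatrix}_D$ consisting of an integer $D\ge0$ and $2k$ partitions $\alpha^i,\beta^i$ with $\sum_{i=1}^k(|\alpha^i|+|\beta^i|)+D^2=n$, such that: (1) $\alpha^i$ is nonempty for $1\le i<k$; (2) for $1\le i<k$ every part of $\beta^i$ is $\le\alpha^i_1$, and for $2\le i\le k$ every part of $\alpha^i$ and every part of $\beta^i$ is $\ge\alpha^{i-1}_1$; (3) all parts of $\alpha^k$ and $\beta^k$ are $\le D$. The pair $(\alpha^i,\beta^i)$ is the $i$th vector. The $i$th rank is $\rho_i(\eta)=l(\alpha^i)-l(\beta^i)-1$ for $1\le i<k$ and $\rho_k(\eta)=l(\alpha^k)-l(\beta^k)$.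 A pair of partitions $(\alpha,\beta)$ is strict shifted if $l(\alpha)>l(\beta)$ and $\alpha_{i+1}>\beta_i$ for $1\le i\le l(\beta)$. A $k$-marked Durfee symbol is strict shifted if each of its vectors $(\alpha^i,\beta^i)$ with $1\le i\le k-1$ is strict shifted. Balanced parts: for a pair of partitions $(\gamma,\delta)$, with the convention $\gamma_j=0$ for $j>l(\gamma)$, the parts $\delta_1,\dots,\delta_{l(\delta)}$ are classified recursively in increasing order of index: $\delta_i$ is balanced iff $\gamma_{i+1}\le\delta_i$ and the number of indices $j$ with $2\le j\le l(\gamma)$ and $\gamma_j>\delta_i$ equals the number of indices $j<i$ for which $\delta_j$ is unbalanced. $b(\gamma,\delta)$ is the number of balanced parts. The $i$th balanced number of a $k$-marked Durfee symbol $\eta$ is $\mathrm{nb}_i(\eta)=b(\alpha^i,\beta^i)$ for $1\le i<k$ and $\mathrm{nb}_k(\eta)=0$. *)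

theory Defs
  imports Main
begin

definition is_partition :: "nat list \<Rightarrow> bool" where
  "is_partition xs \<longleftrightarrow> sorted_wrt (\<ge>) xs \<and> (\<forall>x\<in>set xs. 0 < x)"

(* 1-indexed part with convention gamma_j = 0 for j > l(gamma) *)
definition part :: "nat list \<Rightarrow> nat \<Rightarrow> nat" where
  "part xs j = (if 1 \<le> j \<and> j \<le> length xs then xs ! (j - 1) else 0)"

(* A k-marked Durfee symbol is represented as (D, [alpha^1,...,alpha^k], [beta^1,...,beta^k]) *)
type_synonym durfee = "nat \<times> nat list list \<times> nat list list"

definition dD :: "durfee \<Rightarrow> nat" where "dD \<eta> = fst \<eta>"
definition alpha :: "durfee \<Rightarrow> nat \<Rightarrow> nat list" where "alpha \<eta> i = fst (snd \<eta>) ! (i - 1)"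
definition beta :: "durfee \<Rightarrow> nat \<Rightarrow> nat list" where "beta \<eta> i = snd (snd \<eta>) ! (i - 1)"

definition is_kmds :: "nat \<Rightarrow> nat \<Rightarrow> durfee \<Rightarrow> bool" where
  "is_kmds k n \<eta> \<longleftrightarrow>
     length (fst (snd \<eta>)) = k \<and> length (snd (snd \<eta>)) = k \<and>
     (\<forall>i\<in>{1..k}. is_partition (alpha \<eta> i) \<and> is_partition (beta \<eta> i)) \<and>
     (\<Sum>i=1..k. sum_list (alpha \<eta> i) + sum_list (beta \<eta> i)) + (dD \<eta>)\<^sup>2 = n \<and>
     (\<forall>i\<in>{1..<k}. alpha \<eta> i \<noteq> []) \<and>
     (\<forall>i\<in>{1..<k}. \<forall>x\<in>set (beta \<eta> i). x \<le> part (alpha \<eta> i) 1) \<and>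
     (\<forall>i\<in>{2..k}. \<forall>x\<in>set (alpha \<eta> i) \<union> set (beta \<eta> i). part (alpha \<eta> (i - 1)) 1 \<le> x) \<and>
     (\<forall>x\<in>set (alpha \<eta> k) \<union> set (beta \<eta> k). x \<le> dD \<eta>)"

definition rank :: "nat \<Rightarrow> durfee \<Rightarrow> nat \<Rightarrow> int" where
  "rank k \<eta> i = (if i < k
     then int (length (alpha \<eta> i)) - int (length (beta \<eta> i)) - 1
     else int (length (alpha \<eta> i)) - int (length (beta \<eta> i)))"

definition strict_shifted_pair :: "nat list \<Rightarrow> nat list \<Rightarrow> bool" where
  "strict_shifted_pair a b \<longleftrightarrow> length b < length a \<and>
     (\<forall>i. 1 \<le> i \<and> i \<le> length b \<longrightarrow> part a (i + 1) > part b i)"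

definition strict_shifted :: "nat \<Rightarrow> durfee \<Rightarrow> bool" where
  "strict_shifted k \<eta> \<longleftrightarrow> (\<forall>i\<in>{1..<k}. strict_shifted_pair (alpha \<eta> i) (beta \<eta> i))"

(* Balanced parts.  bal_aux g i u ds: ds = remaining parts delta_i, delta_{i+1}, ...
   (1-indexed i), u = number of unbalanced parts among delta_1..delta_{i-1};
   returns the number of balanced parts among ds. *)
fun bal_aux :: "nat list \<Rightarrow> nat \<Rightarrow> nat \<Rightarrow> nat list \<Rightarrow> nat" where
  "bal_aux g i u [] = 0"
| "bal_aux g i u (d # ds) =
     (if part g (i + 1) \<le> d \<and> card {j. 2 \<le> j \<and> j \<le> length g \<and> part g j > d} = u
      then Suc (bal_aux g (Suc i) u ds)
      else bal_aux g (Suc i) (Suc u) ds)"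

definition balanced_count :: "nat list \<Rightarrow> nat list \<Rightarrow> nat" where
  "balanced_count g d = bal_aux g 1 0 d"

definition nb :: "nat \<Rightarrow> durfee \<Rightarrow> nat \<Rightarrow> nat" where
  "nb k \<eta> i = (if i < k then balanced_count (alpha \<eta> i) (beta \<eta> i) else 0)"

end

theory Submission
  imports Defs "HOL-Library.Multiset"
begin

(* The conditions defining a marked Durfee symbol couple its vectors only through their contents
   (the multisets of their parts), while the rank and balance conditions are vector-wise.  So it
   suffices to find, for every m and t, a content-preserving bijection from the inner vectors of
   rank m with t balanced parts onto the strict shifted pairs of rank m + 2t, and to apply it
   vector by vector (vmap_bij).  Such a bijection exists once both classes have the same finite
   cardinality for every content M (ranked_shifted_bij).

   The counting identity card_ranked_shifted is proved by induction on the number of parts: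
   removing the c copies of the smallest part v writes both classes as disjoint unions of padded
   copies of the classes for the remaining content (ranked_decompose, shifted_decompose), and the
   two index sets correspond bijectively in a way compatible with the induction hypothesis
   (index_bij). *)

lemma part_1: "a \<noteq> [] \<Longrightarrow> Defs.part a (Suc 0) = hd a"
  by (cases a) (simp_all add: Defs.part_def)

lemma sorted_replicate_ge: "sorted_wrt (\<ge>) (replicate n (v::nat))"
  by (induction n) auto

lemma strict_shifted_pair_nth:
  "strict_shifted_pair a b \<longleftrightarrow> length b < length a \<and> (\<forall>i<length b. b ! i < a ! Suc i)"
proof
  assume s: "strict_shifted_pair a b"
  then have l: "length b < length a" by (simp add: strict_shifted_pair_def)
  have "b ! i < a ! Suc i" if i: "i < length b" for i
  proof -
    have "Defs.part a (Suc i + 1) > Defs.part b (Suc i)" using s i by (simp add: strict_shifted_pair_def)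
    then show ?thesis using i l by (simp add: Defs.part_def split: if_splits)
  qed
  with l show "length b < length a \<and> (\<forall>i<length b. b ! i < a ! Suc i)" by simp
next
  assume r: "length b < length a \<and> (\<forall>i<length b. b ! i < a ! Suc i)"
  show "strict_shifted_pair a b" unfolding strict_shifted_pair_def
  proof (intro conjI allI impI)
    show "length b < length a" using r by simp
    fix i assume "1 \<le> i \<and> i \<le> length b"
    then obtain j where "i = Suc j" "j < length b" by (cases i) auto
    then show "Defs.part b i < Defs.part a (i + 1)" using r by (simp add: Defs.part_def)
  qed
qed

section \<open>Balanced parts, recomputed\<close>

definition above :: "nat list \<Rightarrow> nat \<Rightarrow> nat" where
  "above g d = length (filter (\<lambda>x. d < x) (tl g))"

(* The balanced count without the positional test g_(i+1) <= d_i, which turns out to be redundant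
   (bal_aux_eq_balanced); u is the number of unbalanced parts met so far *)
fun balanced :: "nat list \<Rightarrow> nat \<Rightarrow> nat list \<Rightarrow> nat" where
  "balanced g u [] = 0"
| "balanced g u (d # ds) =
     (if above g d = u then Suc (balanced g u ds) else balanced g (Suc u) ds)"

lemma card_parts_above: "card {j. 2 \<le> j \<and> j \<le> length g \<and> Defs.part g j > d} = above g d"
proof -
  have "{j. 2 \<le> j \<and> j \<le> length g \<and> Defs.part g j > d} = (\<lambda>i. i + 2) ` {i. i < length (tl g) \<and> d < tl g ! i}"
  proof (rule set_eqI, rule iffI)
    fix j assume j: "j \<in> {j. 2 \<le> j \<and> j \<le> length g \<and> Defs.part g j > d}"
    then have "g ! (j - 1) = tl g ! (j - 2)" by (cases g) (auto simp: nth_Cons' numeral_2_eq_2)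
    then show "j \<in> (\<lambda>i. i + 2) ` {i. i < length (tl g) \<and> d < tl g ! i}"
      using j by (auto simp: Defs.part_def image_iff intro!: exI[of _ "j - 2"])
  qed (cases g; auto simp: Defs.part_def)
  then show ?thesis by (simp add: card_image inj_on_def above_def length_filter_conv_card)
qed

lemma sorted_nth_filter_count:
  assumes "sorted_wrt (\<ge>) xs" "length (filter (\<lambda>x. d < x) xs) = u" "u < length xs"
  shows "xs ! u \<le> (d::nat)"
  using assms
proof (induction xs arbitrary: u)
  case (Cons x xs)
  show ?case
  proof (cases "d < x")
    case False
    then have "filter (\<lambda>x. d < x) xs = []" using Cons.prems(1) by (auto simp: filter_empty_conv)
    with False Cons.prems show ?thesis by (cases u) auto
  qed (use Cons in \<open>cases u; auto\<close>)
qed simp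

(* For a partition g, a part passing the counting test also passes the positional test, because
   the u parts of tl g above d occupy positions 2..u+1 and u < i *)
lemma bal_aux_eq_balanced:
  assumes "sorted_wrt (\<ge>) g" "u < i"
  shows "bal_aux g i u ds = balanced g u ds"
  using assms(2)
proof (induction ds arbitrary: i u)
  case (Cons d ds)
  have positional: "Defs.part g (i + 1) \<le> d" if count: "above g d = u"
  proof (cases "i + 1 \<le> length g")
    case True
    have st: "sorted_wrt (\<ge>) (tl g)" using assms(1) by (cases g) auto
    have ul: "u < length (tl g)" using True Cons.prems by simp
    have "tl g ! u \<le> d" using sorted_nth_filter_count[OF st _ ul] count by (simp add: above_def)
    moreover have "g ! i \<le> g ! Suc u"
      using Cons.prems assms(1) True by (cases "i = Suc u") (auto simp: sorted_wrt_iff_nth_less)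
    moreover have "tl g ! u = g ! Suc u" using ul by (cases g) auto
    ultimately show ?thesis using True by (simp add: Defs.part_def)
  qed (simp add: Defs.part_def)
  show ?case
    using Cons.IH[of u "Suc i"] Cons.IH[of "Suc u" "Suc i"] Cons.prems positional
    by (simp add: card_parts_above)
qed simp

lemma balanced_count_eq_balanced:
  "sorted_wrt (\<ge>) g \<Longrightarrow> balanced_count g d = balanced g 0 d"
  by (simp add: balanced_count_def bal_aux_eq_balanced)

lemma balanced_le_length: "balanced g u ds \<le> length ds"
  by (induction ds arbitrary: u) (auto simp: le_SucI)

lemma balanced_append:
  "balanced g u (xs @ ys) = balanced g u xs + balanced g (u + length xs - balanced g u xs) ys"
proof (induction xs arbitrary: u)
  case (Cons x xs)
  show ?case
    using Cons.IH[of u] Cons.IH[of "Suc u"] balanced_le_length[of g u xs] balanced_le_length[of g "Suc u" xs]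
    by (auto simp: Suc_diff_le)
qed simp

lemma balanced_cong:
  "(\<And>d. d \<in> set ds \<Longrightarrow> above g d = above g' d) \<Longrightarrow> balanced g u ds = balanced g' u ds"
  by (induction ds arbitrary: u) auto

lemma balanced_replicate:
  assumes "above g v = K"
  shows "balanced g u (replicate j v) = (if u \<le> K then j - (K - u) else 0)"
  using assms
proof (induction j arbitrary: u)
  case (Suc j)
  then show ?case using Suc.IH[of "Suc u"] by (cases "K = u") auto
qed simp

lemma above_antimono: "d' \<le> d \<Longrightarrow> above g d \<le> above g d'"
proof -
  assume "d' \<le> d"
  then have "length (filter (\<lambda>x. d < x) xs) \<le> length (filter (\<lambda>x. d' < x) xs)" for xs
    by (induction xs) auto
  then show ?thesis by (simp add: above_def)
qed

lemma unbalanced_bound: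
  assumes "sorted_wrt (\<ge>) ds" "ds \<noteq> [] \<Longrightarrow> u \<le> above g (hd ds)"
  shows "u + length ds - balanced g u ds \<le> max u (length (tl g))"
  using assms
proof (induction ds arbitrary: u)
  case (Cons d ds)
  have ud: "u \<le> above g d" using Cons.prems by simp
  have next_hd: "ds \<noteq> [] \<Longrightarrow> above g d \<le> above g (hd ds)"
    using Cons.prems(1) by (cases ds) (auto intro: above_antimono)
  have bl: "balanced g u ds \<le> length ds" "balanced g (Suc u) ds \<le> length ds"
    by (rule balanced_le_length)+
  show ?case
  proof (cases "above g d = u")
    case True
    then show ?thesis using Cons.IH[of u] Cons.prems(1) next_hd bl by auto
  next
    case False
    then have "Suc u \<le> above g d" using ud by simp
    moreover have "above g d \<le> length (tl g)" unfolding above_def by (rule length_filter_le)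
    ultimately show ?thesis
      using Cons.IH[of "Suc u"] Cons.prems(1) next_hd False bl by fastforce
  qed
qed simp

section \<open>Vector classes\<close>

definition content :: "nat list \<times> nat list \<Rightarrow> nat multiset" where
  "content p = mset (fst p) + mset (snd p)"

(* The shape of the i-th vector of a marked Durfee symbol for i < k *)
definition inner_vector :: "nat list \<Rightarrow> nat list \<Rightarrow> bool" where
  "inner_vector a b \<longleftrightarrow> is_partition a \<and> is_partition b \<and> a \<noteq> [] \<and> (\<forall>x\<in>set b. x \<le> hd a)"

definition vectors :: "nat multiset \<Rightarrow> (nat list \<times> nat list) set" where
  "vectors M = {(a,b). inner_vector a b \<and> mset a + mset b = M}"

(* Inner vectors of content M with excess E = rank + balance and T balanced parts *)
definition ranked :: "nat multiset \<Rightarrow> nat \<Rightarrow> nat \<Rightarrow> (nat list \<times> nat list) set" where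
  "ranked M E T = {(a,b). (a,b) \<in> vectors M \<and> balanced a 0 b = T \<and> length a + T = E + 1 + length b}"

definition sspairs :: "nat multiset \<Rightarrow> (nat list \<times> nat list) set" where
  "sspairs M = {(a,b). is_partition a \<and> is_partition b \<and> strict_shifted_pair a b \<and> mset a + mset b = M}"

definition shifted :: "nat multiset \<Rightarrow> nat \<Rightarrow> (nat list \<times> nat list) set" where
  "shifted M H = {(a,b). (a,b) \<in> sspairs M \<and> length a = H + 1 + length b}"

lemma inner_vector_largest_part:
  "inner_vector a b \<Longrightarrow> Defs.part a 1 = Max (set_mset (content (a,b)))"
proof -
  assume v: "inner_vector a b"
  then have "a \<noteq> []" "sorted_wrt (\<ge>) a" by (auto simp: inner_vector_def is_partition_def)
  then have "\<forall>x\<in>set a. x \<le> hd a" by (cases a) auto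
  with v \<open>a \<noteq> []\<close> show ?thesis
    by (simp add: part_1 content_def) (intro Max_eqI[symmetric], auto simp: inner_vector_def)
qed

lemma sspairs_inner_vector:
  assumes "(a,b) \<in> sspairs M"
  shows "inner_vector a b"
proof -
  have p: "is_partition a" "is_partition b" and l: "length b < length a" "\<forall>i<length b. b ! i < a ! Suc i"
    using assms by (auto simp: sspairs_def strict_shifted_pair_nth)
  have "x \<le> hd a" if x: "x \<in> set b" for x
  proof (cases b)
    case (Cons y ys)
    have "x \<le> y" using p(2) x Cons by (auto simp: is_partition_def)
    also have "y < a ! 1" using l Cons by auto
    also have "a ! 1 \<le> a ! 0" using p(1) l(1) Cons by (auto simp: is_partition_def sorted_wrt_iff_nth_less)
    also have "a ! 0 = hd a" using l(1) by (cases a) auto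
    finally show ?thesis by simp
  qed (use x in simp)
  with p l(1) show ?thesis by (auto simp: inner_vector_def)
qed

(* An inner vector has at most length a - 1 unbalanced parts, so its excess is a natural number *)
lemma vectors_excess:
  assumes "(a,b) \<in> vectors M"
  shows "Suc (length b) \<le> length a + balanced a 0 b"
proof -
  have "sorted_wrt (\<ge>) b" "a \<noteq> []" using assms by (auto simp: vectors_def inner_vector_def is_partition_def)
  then show ?thesis using unbalanced_bound[of b 0 a] balanced_le_length[of a 0 b] by (cases a) auto
qed

(* The excess length a - length b - 1 + (balanced parts), natural by vectors_excess *)
definition excess :: "nat list \<Rightarrow> nat list \<Rightarrow> nat" where
  "excess a b = length a + balanced a 0 b - Suc (length b)"

lemma finite_pairs_content: "finite {(a,b). mset a + mset b = (M::nat multiset)}"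
proof (rule finite_subset)
  let ?S = "{xs. set xs \<subseteq> set_mset M \<and> length xs \<le> size M}"
  show "{(a,b). mset a + mset b = M} \<subseteq> ?S \<times> ?S"
    by (auto dest!: sym[of _ M] simp: size_mset[symmetric] simp del: size_mset)
  show "finite (?S \<times> ?S)" by (intro finite_cartesian_product finite_lists_length_le) auto
qed

lemma finite_ranked: "finite (ranked M E T)"
  by (rule finite_subset[OF _ finite_pairs_content[of M]]) (auto simp: ranked_def vectors_def)

lemma finite_shifted: "finite (shifted M H)"
  by (rule finite_subset[OF _ finite_pairs_content[of M]]) (auto simp: shifted_def sspairs_def)

section \<open>Peeling off the smallest part\<close>

definition pad :: "nat \<Rightarrow> nat \<Rightarrow> nat \<Rightarrow> nat list \<times> nat list \<Rightarrow> nat list \<times> nat list" where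
  "pad v c j p = (fst p @ replicate (c - j) v, snd p @ replicate j v)"

lemma partition_split_min:
  assumes "sorted_wrt (\<ge>) a" "\<forall>x\<in>set a. v \<le> (x::nat)"
  shows "a = filter (\<lambda>x. v < x) a @ replicate (count (mset a) v) v"
  using assms
proof (induction a)
  case (Cons x xs)
  show ?case
  proof (cases "v < x")
    case False
    then have "\<forall>y\<in>set (x # xs). y = v" using Cons.prems by force
    then show ?thesis by (metis filter_False less_irrefl mset_replicate count_replicate_mset
        replicate_length_same append_Nil)
  qed (use Cons in auto)
qed simp

lemma is_partition_filter: "is_partition a \<Longrightarrow> is_partition (filter P a)"
  by (auto simp: is_partition_def sorted_wrt_filter)

lemma is_partition_append_replicate:
  assumes "is_partition a" "\<forall>x\<in>set a. v < x" "0 < v"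
  shows "is_partition (a @ replicate n v)"
  using assms sorted_replicate_ge[of n v] by (auto simp: is_partition_def sorted_wrt_append less_imp_le)

lemma pad_decompose:
  assumes "is_partition a" "is_partition b" "mset a + mset b = M' + replicate_mset c v" "\<forall>x\<in>#M'. v < x"
  defines "j \<equiv> count (mset b) v"
  shows "(a,b) = pad v c j (filter (\<lambda>x. v<x) a, filter (\<lambda>x. v<x) b)"
    and "mset (filter (\<lambda>x. v<x) a) + mset (filter (\<lambda>x. v<x) b) = M'"
    and "j \<le> c"
proof -
  have sub: "set a \<union> set b \<subseteq> set_mset (M' + replicate_mset c v)"
    using assms(3) by (metis set_mset_mset set_mset_union equalityD1)
  then have ge: "\<forall>x\<in>set a. v \<le> x" "\<forall>x\<in>set b. v \<le> x" using assms(4)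
    by (auto simp: less_imp_le split: if_splits)
  have "count M' v = 0" using assms(4) by (meson count_inI less_irrefl)
  then have cnt: "count (mset a) v + j = c"
    using arg_cong[OF assms(3), of "\<lambda>M. count M v"] by (simp add: j_def)
  then show "j \<le> c" by simp
  have "a = filter (\<lambda>x. v < x) a @ replicate (c - j) v" "b = filter (\<lambda>x. v < x) b @ replicate j v"
    using partition_split_min assms(1,2) ge cnt by (auto simp: is_partition_def j_def)
  then show "(a,b) = pad v c j (filter (\<lambda>x. v<x) a, filter (\<lambda>x. v<x) b)"
    by (simp add: pad_def)
  have "filter_mset (\<lambda>x. v < x) (replicate_mset c v) = {#}" by (induction c) auto
  moreover have "filter_mset (\<lambda>x. v < x) M' = M'" using assms(4) by (simp add: filter_mset_eq_conv)
  ultimately show "mset (filter (\<lambda>x. v<x) a) + mset (filter (\<lambda>x. v<x) b) = M'"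
    using arg_cong[OF assms(3), of "filter_mset (\<lambda>x. v < x)"] by simp
qed

lemma pad_inj:
  assumes "\<forall>x\<in>set (fst p) \<union> set (snd p) \<union> set (fst q) \<union> set (snd q). v < x"
    and "pad v c j p = pad v c j' q"
  shows "j = j'" "p = q"
proof -
  have "count (mset (snd (pad v c j p))) v = j" "count (mset (snd (pad v c j' q))) v = j'"
    using assms(1) by (auto simp: pad_def count_eq_zero_iff)
  then show "j = j'" using assms(2) by simp
  have "filter (\<lambda>x. v<x) (fst (pad v c j p)) = fst p" "filter (\<lambda>x. v<x) (snd (pad v c j p)) = snd p"
    "filter (\<lambda>x. v<x) (fst (pad v c j' q)) = fst q" "filter (\<lambda>x. v<x) (snd (pad v c j' q)) = snd q"
    using assms(1) by (auto simp: pad_def filter_id_conv)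
  then show "p = q" using assms(2) by (metis prod.exhaust_sel)
qed

lemma pad_content:
  "j \<le> c \<Longrightarrow> mset (fst (pad v c j p)) + mset (snd (pad v c j p)) = mset (fst p) + mset (snd p) + replicate_mset c v"
proof -
  assume "j \<le> c"
  then have "replicate_mset (c - j) v + replicate_mset j v = replicate_mset c v"
    by (intro multiset_eqI) auto
  then show ?thesis by (simp add: pad_def add_ac)
qed

lemma above_append_replicate:
  assumes "a \<noteq> []" "\<forall>x\<in>set a. v < x"
  shows "v < d \<Longrightarrow> above (a @ replicate n v) d = above a d"
    and "above (a @ replicate n v) v = length a - 1"
proof -
  show "v < d \<Longrightarrow> above (a @ replicate n v) d = above a d" using assms by (simp add: above_def)
  have "filter (\<lambda>x. v < x) (tl a) = tl a" using assms by (auto simp: filter_id_conv dest: list.set_sel(2))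
  then show "above (a @ replicate n v) v = length a - 1" using assms by (simp add: above_def)
qed

lemma strict_shifted_pair_pad:
  assumes gt: "\<forall>x\<in>set a \<union> set b. v < (x::nat)" and ne: "a \<noteq> [] \<or> b \<noteq> []"
  shows "strict_shifted_pair (a @ replicate n v) (b @ replicate j v) \<longleftrightarrow>
         strict_shifted_pair a b \<and> j + 1 + length b \<le> length a"
proof
  let ?A = "a @ replicate n v" and ?B = "b @ replicate j v"
  assume s: "strict_shifted_pair ?A ?B"
  then have l: "length ?B < length ?A" and c: "\<forall>i<length ?B. ?B ! i < ?A ! Suc i"
    by (auto simp: strict_shifted_pair_nth)
  have long: "Suc i < length a" if i: "i < length ?B" for i
  proof (rule ccontr)
    assume "\<not> Suc i < length a"
    then have "?A ! Suc i = v" using l i by (simp add: nth_append)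
    moreover have "v \<le> ?B ! i" using i gt by (auto simp: nth_append less_imp_le dest: nth_mem)
    ultimately show False using c i by fastforce
  qed
  have "j + 1 + length b \<le> length a"
  proof (cases "length ?B")
    case 0
    then show ?thesis using ne by (cases a) auto
  qed (use long in fastforce)
  moreover have "b ! i < a ! Suc i" if "i < length b" for i
    using c[rule_format, of i] long[of i] that by (simp add: nth_append)
  ultimately show "strict_shifted_pair a b \<and> j + 1 + length b \<le> length a"
    by (simp add: strict_shifted_pair_nth)
next
  let ?A = "a @ replicate n v" and ?B = "b @ replicate j v"
  assume r: "strict_shifted_pair a b \<and> j + 1 + length b \<le> length a"
  then have c: "\<forall>i<length b. b ! i < a ! Suc i" and len: "j + 1 + length b \<le> length a"
    by (auto simp: strict_shifted_pair_nth)
  have "?B ! i < ?A ! Suc i" if i: "i < length ?B" for i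
  proof (cases "i < length b")
    case False
    then show ?thesis using i gt len by (auto simp: nth_append)
  qed (use c i len in \<open>simp add: nth_append\<close>)
  with len show "strict_shifted_pair ?A ?B" by (simp add: strict_shifted_pair_nth)
qed

lemma card_UN_images:
  assumes "finite I" "\<And>x. x \<in> I \<Longrightarrow> finite (S x)"
    and "\<And>x y p q. x \<in> I \<Longrightarrow> y \<in> I \<Longrightarrow> p \<in> S x \<Longrightarrow> q \<in> S y \<Longrightarrow> F x p = F y q \<Longrightarrow> x = y \<and> p = q"
  shows "card (\<Union>x\<in>I. F x ` S x) = (\<Sum>x\<in>I. card (S x))"
proof -
  have "card (\<Union>x\<in>I. F x ` S x) = (\<Sum>x\<in>I. card (F x ` S x))"
    by (rule card_UN_disjoint) (use assms in \<open>fastforce+\<close>)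
  also have "\<dots> = (\<Sum>x\<in>I. card (S x))"
    by (rule sum.cong[OF refl], rule card_image) (use assms(3) in \<open>auto intro!: inj_onI\<close>)
  finally show ?thesis .
qed

locale peel =
  fixes v c :: nat and M' :: "nat multiset"
  assumes nonempty: "M' \<noteq> {#}" and below: "\<forall>x\<in>#M'. v < x" and pos: "0 < v"
begin

abbreviation "M \<equiv> M' + replicate_mset c v"

lemma content_above: "mset a + mset b = M' \<Longrightarrow> \<forall>x\<in>set a \<union> set b. v < x"
  using below by auto

lemma vectors_pad_iff:
  "q \<in> vectors M \<longleftrightarrow> (\<exists>j p. j \<le> c \<and> p \<in> vectors M' \<and> q = pad v c j p)"
proof
  assume "q \<in> vectors M"
  then obtain a b where q: "q = (a,b)" "inner_vector a b" "mset a + mset b = M"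
    by (auto simp: vectors_def)
  define a' b' where "a' = filter (\<lambda>x. v<x) a" and "b' = filter (\<lambda>x. v<x) b"
  define j where "j = count (mset b) v"
  have ab: "is_partition a" "is_partition b" "a \<noteq> []" "\<forall>x\<in>set b. x \<le> hd a"
    using q(2) by (auto simp: inner_vector_def)
  have d: "(a,b) = pad v c j (a', b')" "mset a' + mset b' = M'" "j \<le> c"
    using pad_decompose[OF ab(1,2) q(3) below] unfolding a'_def b'_def j_def by auto
  have a_eq: "a = a' @ replicate (c - j) v" using d(1) by (simp add: pad_def)
  have "a' \<noteq> []"
  proof
    assume a'e: "a' = []"
    obtain x where "x \<in># M'" using nonempty by fastforce
    then have "x \<in> set b" "v < x" using d(2) a'e below unfolding b'_def by auto
    moreover have "hd a = v" using a_eq a'e ab(3) by (cases "c - j") auto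
    ultimately show False using ab(4) by fastforce
  qed
  then have "hd a = hd a'" using a_eq by simp
  then have "(a', b') \<in> vectors M'"
    using ab d(2) \<open>a' \<noteq> []\<close> unfolding a'_def b'_def by (auto simp: vectors_def inner_vector_def is_partition_filter)
  then show "\<exists>j p. j \<le> c \<and> p \<in> vectors M' \<and> q = pad v c j p" using d q(1) by blast
next
  assume "\<exists>j p. j \<le> c \<and> p \<in> vectors M' \<and> q = pad v c j p"
  then obtain j a b where jp: "j \<le> c" "(a,b) \<in> vectors M'" "q = pad v c j (a,b)" by auto
  then have ab: "is_partition a" "is_partition b" "a \<noteq> []" "\<forall>x\<in>set b. x \<le> hd a" "mset a + mset b = M'"
    by (auto simp: vectors_def inner_vector_def)
  have gt: "\<forall>x\<in>set a \<union> set b. v < x" using content_above[OF ab(5)] .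
  show "q \<in> vectors M"
    using is_partition_append_replicate[OF ab(1) _ pos, of "c - j"] is_partition_append_replicate[OF ab(2) _ pos, of j]
      pad_content[OF jp(1), of v "(a,b)"] ab(3-5) gt jp(3)
    by (auto simp: vectors_def inner_vector_def pad_def less_imp_le intro: order.trans[of _ v "hd a"])
qed

(* Padding adds j - excess balanced parts: the c copies of v in the second partition see
   exactly length a' - 1 larger parts in the tail of the first one *)
lemma balanced_pad:
  assumes "(a',b') \<in> vectors M'"
  shows "balanced (fst (pad v c j (a',b'))) 0 (snd (pad v c j (a',b'))) = balanced a' 0 b' + (j - excess a' b')"
proof -
  have ne: "a' \<noteq> []" and gt: "\<forall>x\<in>set a' \<union> set b'. v < x"
    using assms content_above by (auto simp: vectors_def inner_vector_def)
  define a where "a = a' @ replicate (c - j) v"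
  have same: "balanced a 0 b' = balanced a' 0 b'"
    by (rule balanced_cong) (use gt above_append_replicate(1)[OF ne] in \<open>auto simp: a_def\<close>)
  have above_v: "above a v = length a' - 1" unfolding a_def using above_append_replicate(2)[OF ne] gt by simp
  have ex: "Suc (length b') \<le> length a' + balanced a' 0 b'" by (rule vectors_excess[OF assms])
  have "balanced a 0 (b' @ replicate j v) = balanced a 0 b' + balanced a (length b' - balanced a 0 b') (replicate j v)"
    using balanced_append[of a 0 b' "replicate j v"] by simp
  also have "\<dots> = balanced a' 0 b' + (j - excess a' b')"
    using balanced_replicate[OF above_v, of "length b' - balanced a 0 b'" j] same ex balanced_le_length[of a' 0 b']
    by (simp add: excess_def)
  finally show ?thesis by (simp add: pad_def a_def)
qed

lemma sspairs_pad_iff: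
  "q \<in> sspairs M \<longleftrightarrow>
     (\<exists>j p. j \<le> c \<and> p \<in> sspairs M' \<and> j + 1 + length (snd p) \<le> length (fst p) \<and> q = pad v c j p)"
proof
  assume "q \<in> sspairs M"
  then obtain a b where q: "q = (a,b)" "is_partition a" "is_partition b" "strict_shifted_pair a b"
    "mset a + mset b = M" by (auto simp: sspairs_def)
  define a' b' where "a' = filter (\<lambda>x. v<x) a" and "b' = filter (\<lambda>x. v<x) b"
  define j where "j = count (mset b) v"
  have d: "(a,b) = pad v c j (a', b')" "mset a' + mset b' = M'" "j \<le> c"
    using pad_decompose[OF q(2,3,5) below] unfolding a'_def b'_def j_def by auto
  have "a' \<noteq> [] \<or> b' \<noteq> []" using d(2) nonempty by auto
  then have "strict_shifted_pair a' b' \<and> j + 1 + length b' \<le> length a'"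
    using strict_shifted_pair_pad[OF content_above[OF d(2)]] q(4) d(1) by (simp add: pad_def)
  moreover have "is_partition a'" "is_partition b'"
    using q unfolding a'_def b'_def by (auto simp: is_partition_filter)
  ultimately show "\<exists>j p. j \<le> c \<and> p \<in> sspairs M' \<and> j + 1 + length (snd p) \<le> length (fst p) \<and> q = pad v c j p"
    using d q(1) by (auto simp: sspairs_def)
next
  assume "\<exists>j p. j \<le> c \<and> p \<in> sspairs M' \<and> j + 1 + length (snd p) \<le> length (fst p) \<and> q = pad v c j p"
  then obtain j a b where jp: "j \<le> c" "(a,b) \<in> sspairs M'" "j + 1 + length b \<le> length a" "q = pad v c j (a,b)"
    by auto
  then have ab: "is_partition a" "is_partition b" "strict_shifted_pair a b" "mset a + mset b = M'"
    by (auto simp: sspairs_def)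
  have "a \<noteq> [] \<or> b \<noteq> []" using ab(4) nonempty by auto
  then show "q \<in> sspairs M"
    using is_partition_append_replicate[OF ab(1) _ pos, of "c - j"] is_partition_append_replicate[OF ab(2) _ pos, of j]
      strict_shifted_pair_pad[OF content_above[OF ab(4)]] ab(3) jp pad_content[OF jp(1), of v "(a,b)"] ab(4)
      content_above[OF ab(4)]
    by (simp add: sspairs_def pad_def)
qed

definition ranked_index :: "nat \<Rightarrow> nat \<Rightarrow> (nat \<times> nat \<times> nat) set" where
  "ranked_index E T = {(j,e,t). j \<le> c \<and> t + (j - e) = T \<and> (c - j) + (e - j) = E}"

definition shifted_index :: "nat \<Rightarrow> (nat \<times> nat) set" where
  "shifted_index H = {(j,h). j \<le> c \<and> j \<le> h \<and> h + c = H + 2 * j}"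

lemma ranked_decompose:
  "ranked M E T = (\<Union>x\<in>ranked_index E T. (\<lambda>(j,e,t). pad v c j) x ` (\<lambda>(j,e,t). ranked M' e t) x)"
proof (rule set_eqI, rule iffI)
  fix q assume q: "q \<in> ranked M E T"
  obtain a b where ab: "q = (a,b)" by fastforce
  have qp: "(a,b) \<in> vectors M" "balanced a 0 b = T" "length a + T = E + 1 + length b"
    using q ab by (auto simp: ranked_def)
  obtain j a' b' where jp: "j \<le> c" "(a',b') \<in> vectors M'" "(a,b) = pad v c j (a',b')"
    using qp(1) vectors_pad_iff by force
  define e t where "e = excess a' b'" and "t = balanced a' 0 b'"
  have "Suc (length b') \<le> length a' + t" using vectors_excess jp(2) t_def by simp
  moreover have "T = t + (j - e)" using balanced_pad[OF jp(2), of j] jp(3)[symmetric] qp(2) e_def t_def by simp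
  moreover have "length a = length a' + (c - j)" "length b = length b' + j" using jp(3) by (auto simp: pad_def)
  ultimately have "(j,e,t) \<in> ranked_index E T" "(a',b') \<in> ranked M' e t"
    using qp(3) jp(1,2) unfolding ranked_index_def ranked_def e_def t_def excess_def by auto
  then show "q \<in> (\<Union>x\<in>ranked_index E T. (\<lambda>(j,e,t). pad v c j) x ` (\<lambda>(j,e,t). ranked M' e t) x)"
    using jp(3) ab by force
next
  fix q assume "q \<in> (\<Union>x\<in>ranked_index E T. (\<lambda>(j,e,t). pad v c j) x ` (\<lambda>(j,e,t). ranked M' e t) x)"
  then obtain j e t a' b' where idx: "(j,e,t) \<in> ranked_index E T" and
    p: "(a',b') \<in> ranked M' e t" and q: "q = pad v c j (a',b')" by auto
  have pp: "(a',b') \<in> vectors M'" "balanced a' 0 b' = t" "length a' + t = e + 1 + length b'"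
    using p by (auto simp: ranked_def)
  have jc: "j \<le> c" "t + (j - e) = T" "(c - j) + (e - j) = E" using idx by (auto simp: ranked_index_def)
  have "q \<in> vectors M" using vectors_pad_iff pp(1) jc(1) q by blast
  moreover have "balanced (fst q) 0 (snd q) = T"
    using balanced_pad[OF pp(1), of j] q pp(2,3) jc(2) by (simp add: excess_def)
  moreover have "length (fst q) + T = E + 1 + length (snd q)" using q pp(3) jc by (auto simp: pad_def)
  ultimately show "q \<in> ranked M E T" by (cases q) (simp add: ranked_def)
qed

lemma shifted_decompose:
  "shifted M H = (\<Union>x\<in>shifted_index H. (\<lambda>(j,h). pad v c j) x ` (\<lambda>(j,h). shifted M' h) x)"
proof (rule set_eqI, rule iffI)
  fix q assume q: "q \<in> shifted M H"
  obtain a b where ab: "q = (a,b)" by fastforce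
  have qp: "(a,b) \<in> sspairs M" "length a = H + 1 + length b" using q ab by (auto simp: shifted_def)
  obtain j a' b' where jp: "j \<le> c" "(a',b') \<in> sspairs M'" "j + 1 + length b' \<le> length a'"
    "(a,b) = pad v c j (a',b')"
    using qp(1) sspairs_pad_iff by force
  define h where "h = length a' - 1 - length b'"
  have "length a = length a' + (c - j)" "length b = length b' + j" using jp(4) by (auto simp: pad_def)
  then have "(j,h) \<in> shifted_index H" "(a',b') \<in> shifted M' h"
    using qp(2) jp(1-3) unfolding shifted_index_def shifted_def h_def by auto
  then show "q \<in> (\<Union>x\<in>shifted_index H. (\<lambda>(j,h). pad v c j) x ` (\<lambda>(j,h). shifted M' h) x)"
    using jp(4) ab by force
next
  fix q assume "q \<in> (\<Union>x\<in>shifted_index H. (\<lambda>(j,h). pad v c j) x ` (\<lambda>(j,h). shifted M' h) x)"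
  then obtain j h a' b' where idx: "(j,h) \<in> shifted_index H" and
    p: "(a',b') \<in> shifted M' h" and q: "q = pad v c j (a',b')" by auto
  have pp: "(a',b') \<in> sspairs M'" "length a' = h + 1 + length b'" using p by (auto simp: shifted_def)
  have jc: "j \<le> c" "j \<le> h" "h + c = H + 2 * j" using idx by (auto simp: shifted_index_def)
  have "q \<in> sspairs M" using sspairs_pad_iff pp jc q by fastforce
  moreover have "length (fst q) = H + 1 + length (snd q)" using q pp(2) jc by (auto simp: pad_def)
  ultimately show "q \<in> shifted M H" by (cases q) (simp add: shifted_def)
qed

(* Distinct indices give disjoint padded copies, so the cardinalities add up *)
lemma card_ranked_sum: "card (ranked M E T) = (\<Sum>(j,e,t)\<in>ranked_index E T. card (ranked M' e t))"
proof -
  have "finite (ranked_index E T)"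
    by (rule finite_subset[of _ "{..c} \<times> {..E+c} \<times> {..T}"]) (auto simp: ranked_index_def)
  moreover have "x = y \<and> p = q"
    if "p \<in> (\<lambda>(j,e,t). ranked M' e t) x" "q \<in> (\<lambda>(j,e,t). ranked M' e t) y"
       "(\<lambda>(j,e,t). pad v c j) x p = (\<lambda>(j,e,t). pad v c j) y q" for x y p q
  proof -
    obtain j e t j' e' t' where xy: "x = (j,e,t)" "y = (j',e',t')" by (cases x, cases y) auto
    have "\<forall>z\<in>set (fst p) \<union> set (snd p) \<union> set (fst q) \<union> set (snd q). v < z"
      using that(1,2) content_above xy by (auto simp: ranked_def vectors_def)
    then have "j = j'" "p = q" using pad_inj that(3) xy by auto
    then show ?thesis using that(1,2) xy by (auto simp: ranked_def)
  qed
  ultimately show ?thesis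
    unfolding ranked_decompose by (subst card_UN_images) (auto simp: finite_ranked split_beta)
qed

lemma card_shifted_sum: "card (shifted M H) = (\<Sum>(j,h)\<in>shifted_index H. card (shifted M' h))"
proof -
  have "finite (shifted_index H)"
    by (rule finite_subset[of _ "{..c} \<times> {..H+c}"]) (auto simp: shifted_index_def)
  moreover have "x = y \<and> p = q"
    if "p \<in> (\<lambda>(j,h). shifted M' h) x" "q \<in> (\<lambda>(j,h). shifted M' h) y"
       "(\<lambda>(j,h). pad v c j) x p = (\<lambda>(j,h). pad v c j) y q" for x y p q
  proof -
    obtain j h j' h' where xy: "x = (j,h)" "y = (j',h')" by (cases x, cases y) auto
    have "\<forall>z\<in>set (fst p) \<union> set (snd p) \<union> set (fst q) \<union> set (snd q). v < z"
      using that(1,2) content_above xy by (auto simp: shifted_def sspairs_def)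
    then have "j = j'" "p = q" using pad_inj that(3) xy by auto
    then show ?thesis using that(1,2) xy by (auto simp: shifted_def)
  qed
  ultimately show ?thesis
    unfolding shifted_decompose by (subst card_UN_images) (auto simp: finite_shifted split_beta)
qed

lemma index_bij:
  "bij_betw (\<lambda>(j,e,t). (min j e, e + t)) (ranked_index E T) (shifted_index (E + T))"
  by (rule bij_betw_byWitness[where f' = "\<lambda>(j,h). if c \<le> E + j then (j, h - T, T) else (c - E, j, h - j)"])
    (auto simp: ranked_index_def shifted_index_def split: if_splits)

lemma card_step:
  assumes IH: "\<And>e t. card (ranked M' e t) = card (shifted M' (e + t))"
  shows "card (ranked M E T) = card (shifted M (E + T))"
proof -
  have "card (ranked M E T) = (\<Sum>(j,e,t)\<in>ranked_index E T. card (shifted M' (e + t)))"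
    by (simp add: card_ranked_sum IH)
  also have "\<dots> = (\<Sum>x\<in>ranked_index E T. (\<lambda>(j,h). card (shifted M' h)) ((\<lambda>(j,e,t). (min j e, e + t)) x))"
    by (rule sum.cong) auto
  also have "\<dots> = (\<Sum>(j,h)\<in>shifted_index (E + T). card (shifted M' h))"
    by (rule sum.reindex_bij_betw[OF index_bij])
  also have "\<dots> = card (shifted M (E + T))" by (simp add: card_shifted_sum)
  finally show ?thesis .
qed

end

lemma pairs_of_replicate_mset:
  assumes "mset a + mset b = replicate_mset c v"
  shows "a = replicate (length a) v" "b = replicate (length b) v" "length a + length b = c"
proof -
  have "set a \<union> set b \<subseteq> {v}" using arg_cong[OF assms, of set_mset] by (auto split: if_splits)
  then have "\<forall>x\<in>set a. x = v" "\<forall>x\<in>set b. x = v" by auto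
  then show "a = replicate (length a) v" "b = replicate (length b) v"
    by (simp_all add: replicate_length_same)
  show "length a + length b = c" using arg_cong[OF assms, of size] by simp
qed

lemma is_partition_replicate: "0 < v \<Longrightarrow> is_partition (replicate n v)"
  using sorted_replicate_ge[of n v] by (simp add: is_partition_def)

(* Base cases: all parts equal v.  Then every part of b is balanced, and a strict shifted pair
   cannot have any part in its second partition *)
lemma ranked_replicate_mset:
  assumes "0 < v"
  shows "ranked (replicate_mset c v) E T = (if E + T + 1 = c then {(replicate (E+1) v, replicate T v)} else {})"
proof -
  have bal: "balanced (replicate n v) 0 (replicate l v) = l" for n l
    using balanced_replicate[of "replicate n v" v 0 0 l] by (simp add: above_def)
  have "q \<in> ranked (replicate_mset c v) E T \<longleftrightarrow> E + T + 1 = c \<and> q = (replicate (E+1) v, replicate T v)" for q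
  proof
    assume "q \<in> ranked (replicate_mset c v) E T"
    then obtain a b where q: "q = (a,b)" "mset a + mset b = replicate_mset c v" "balanced a 0 b = T"
      "length a + T = E + 1 + length b" by (auto simp: ranked_def vectors_def)
    note rep = pairs_of_replicate_mset[OF q(2)]
    have T: "T = length b" using q(3) bal[of "length a" "length b"] rep by simp
    then have "length a = E + 1" using q(4) by simp
    then show "E + T + 1 = c \<and> q = (replicate (E+1) v, replicate T v)"
      using rep(1)[unfolded \<open>length a = E + 1\<close>] rep(2)[folded T] rep(3) T q(1) by simp
  next
    assume "E + T + 1 = c \<and> q = (replicate (E+1) v, replicate T v)"
    moreover have "replicate_mset (E + 1) v + replicate_mset T v = replicate_mset (E + T + 1) v"
      by (intro multiset_eqI) auto
    ultimately show "q \<in> ranked (replicate_mset c v) E T"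
      using is_partition_replicate[OF assms] bal
      by (simp add: ranked_def vectors_def inner_vector_def del: replicate_Suc)
  qed
  then show ?thesis by auto
qed

lemma shifted_replicate_mset:
  assumes "0 < v"
  shows "shifted (replicate_mset c v) H = (if H + 1 = c then {(replicate c v, [])} else {})"
proof -
  have "q \<in> shifted (replicate_mset c v) H \<longleftrightarrow> H + 1 = c \<and> q = (replicate c v, [])" for q
  proof
    assume "q \<in> shifted (replicate_mset c v) H"
    then obtain a b where q: "q = (a,b)" "mset a + mset b = replicate_mset c v"
      "strict_shifted_pair a b" "length a = H + 1 + length b"
      by (auto simp: shifted_def sspairs_def)
    note rep = pairs_of_replicate_mset[OF q(2)]
    have "b = []"
    proof (rule ccontr)
      assume "b \<noteq> []"
      then have "b ! 0 < a ! 1" "1 < length a" using q(3) by (cases b; auto simp: strict_shifted_pair_nth)+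
      moreover have "b ! 0 = v" "a ! 1 = v"
        using rep(1,2) \<open>b \<noteq> []\<close> \<open>1 < length a\<close> by (metis length_greater_0_conv nth_replicate)+
      ultimately show False by simp
    qed
    then have "length a = c" "H + 1 = c" using rep(3) q(4) by simp_all
    then show "H + 1 = c \<and> q = (replicate c v, [])" using rep(1) q(1) \<open>b = []\<close> by simp
  next
    assume "H + 1 = c \<and> q = (replicate c v, [])"
    then show "q \<in> shifted (replicate_mset c v) H"
      using assms is_partition_replicate[OF assms] by (simp add: shifted_def sspairs_def strict_shifted_pair_nth is_partition_def)
  qed
  then show ?thesis by auto
qed

theorem card_ranked_shifted: "card (ranked M E T) = card (shifted M (E + T))"
proof (induction "size M" arbitrary: M E T rule: less_induct)
  case less
  show ?case
  proof (cases "M = {#} \<or> 0 \<in># M")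
    case True
    then have "ranked M E T = {}" "shifted M (E + T) = {}"
      by (auto simp: ranked_def vectors_def inner_vector_def shifted_def sspairs_def
          strict_shifted_pair_def is_partition_def)
    then show ?thesis by simp
  next
    case False
    define v where "v = Min (set_mset M)"
    define c where "c = count M v"
    define M' where "M' = filter_mset (\<lambda>x. v < x) M"
    have v: "v \<in># M" "\<forall>x\<in>#M. v \<le> x" using False by (auto simp: v_def)
    have M: "M = M' + replicate_mset c v"
      by (rule multiset_eqI) (use v in \<open>auto simp: M'_def c_def not_in_iff[symmetric]\<close>)
    have pos: "0 < v" using False v(1) by (cases v) auto
    show ?thesis
    proof (cases "M' = {#}")
      case True
      then show ?thesis using M ranked_replicate_mset[OF pos] shifted_replicate_mset[OF pos] by simp
    next
      case False
      interpret peel v c M'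
        using False pos by unfold_locales (auto simp: M'_def)
      have "size M = size M' + c" by (subst M) simp
      then have "size M' < size M" using v(1) by (simp add: c_def)
      then show ?thesis using M card_step less.hyps by simp
    qed
  qed
qed

lemma ranked_content: "p \<in> ranked M E T \<Longrightarrow> content p = M"
  by (auto simp: ranked_def vectors_def content_def)

lemma shifted_content: "q \<in> shifted M H \<Longrightarrow> content q = M"
  by (auto simp: shifted_def sspairs_def content_def)

definition ranked_vectors :: "nat \<Rightarrow> nat \<Rightarrow> (nat list \<times> nat list) set" where
  "ranked_vectors E T = {p. p \<in> ranked (content p) E T}"

definition shifted_vectors :: "nat \<Rightarrow> (nat list \<times> nat list) set" where
  "shifted_vectors H = {q. q \<in> shifted (content q) H}"

lemma ranked_vectors_inner: "p \<in> ranked_vectors E T \<Longrightarrow> inner_vector (fst p) (snd p)"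
  by (auto simp: ranked_vectors_def ranked_def vectors_def)

lemma shifted_vectors_inner: "q \<in> shifted_vectors H \<Longrightarrow> inner_vector (fst q) (snd q)"
  by (auto simp: shifted_vectors_def shifted_def intro: sspairs_inner_vector)

(* Equal cardinalities on each content class glue to a content-preserving bijection *)
lemma ranked_shifted_bij:
  "\<exists>f. bij_betw f (ranked_vectors E T) (shifted_vectors (E + T)) \<and>
       (\<forall>p\<in>ranked_vectors E T. content (f p) = content p)"
proof -
  have "\<forall>M. \<exists>g. bij_betw g (ranked M E T) (shifted M (E + T))"
    using finite_same_card_bij[OF finite_ranked finite_shifted card_ranked_shifted] by blast
  then obtain g where g: "\<And>M. bij_betw (g M) (ranked M E T) (shifted M (E + T))" by metis
  define f where "f p = g (content p) p" for p
  define f' where "f' q = inv_into (ranked (content q) E T) (g (content q)) q" for q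
  have f: "f p \<in> shifted_vectors (E + T) \<and> content (f p) = content p \<and> f' (f p) = p"
    if "p \<in> ranked_vectors E T" for p
  proof -
    have p: "p \<in> ranked (content p) E T" using that by (simp add: ranked_vectors_def)
    have "f p \<in> shifted (content p) (E + T)" using p g[of "content p"] by (auto simp: f_def bij_betw_def)
    moreover have "content (f p) = content p" using calculation by (rule shifted_content)
    ultimately show ?thesis using p g[of "content p"]
      by (simp add: shifted_vectors_def f_def f'_def bij_betw_def inv_into_f_f)
  qed
  have f': "f' q \<in> ranked_vectors E T \<and> f (f' q) = q" if "q \<in> shifted_vectors (E + T)" for q
  proof -
    have q: "q \<in> g (content q) ` ranked (content q) E T"
      using that g[of "content q"] by (simp add: shifted_vectors_def bij_betw_def)
    then have "f' q \<in> ranked (content q) E T" unfolding f'_def by (rule inv_into_into)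
    moreover have "content (f' q) = content q" using calculation by (rule ranked_content)
    ultimately show ?thesis using f_inv_into_f[OF q] by (simp add: ranked_vectors_def f_def f'_def)
  qed
  have "bij_betw f (ranked_vectors E T) (shifted_vectors (E + T))"
    by (rule bij_betw_byWitness[where f' = f']) (use f f' in blast)+
  with f show ?thesis by blast
qed

section \<open>Marked Durfee symbols as lists of vectors\<close>

definition vec :: "durfee \<Rightarrow> nat \<Rightarrow> nat list \<times> nat list" where
  "vec \<eta> i = (alpha \<eta> i, beta \<eta> i)"

definition vmap :: "nat \<Rightarrow> (nat \<Rightarrow> nat list \<times> nat list \<Rightarrow> nat list \<times> nat list) \<Rightarrow> durfee \<Rightarrow> durfee" where
  "vmap k f \<eta> = (dD \<eta>, map (\<lambda>i. fst (f (Suc i) (vec \<eta> (Suc i)))) [0..<k],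
                            map (\<lambda>i. snd (f (Suc i) (vec \<eta> (Suc i)))) [0..<k])"

lemma vec_vmap: "i \<in> {1..k} \<Longrightarrow> vec (vmap k f \<eta>) i = f i (vec \<eta> i)"
  by (cases i) (simp_all add: vec_def vmap_def alpha_def beta_def)

lemma vmap_vmap:
  assumes "is_kmds k n \<eta>" "\<And>i. i \<in> {1..k} \<Longrightarrow> g i (f i (vec \<eta> i)) = vec \<eta> i"
  shows "vmap k g (vmap k f \<eta>) = \<eta>"
proof -
  obtain D As Bs where \<eta>: "\<eta> = (D, As, Bs)" by (cases \<eta>) auto
  have len: "length As = k" "length Bs = k" using assms(1) \<eta> by (simp_all add: is_kmds_def)
  have eq: "g (Suc i) (vec (vmap k f \<eta>) (Suc i)) = vec \<eta> (Suc i)" if "i \<in> set [0..<k]" for i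
    using assms(2)[of "Suc i"] vec_vmap[of "Suc i" k f \<eta>] that by simp
  have "map (\<lambda>i. fst (g (Suc i) (vec (vmap k f \<eta>) (Suc i)))) [0..<k] = map (\<lambda>i. fst (vec \<eta> (Suc i))) [0..<k]"
    "map (\<lambda>i. snd (g (Suc i) (vec (vmap k f \<eta>) (Suc i)))) [0..<k] = map (\<lambda>i. snd (vec \<eta> (Suc i))) [0..<k]"
    by (rule map_cong[OF refl], simp add: eq)+
  moreover have "map (\<lambda>i. fst (vec \<eta> (Suc i))) [0..<k] = As" "map (\<lambda>i. snd (vec \<eta> (Suc i))) [0..<k] = Bs"
    using len by (simp_all add: \<eta> vec_def alpha_def beta_def list_eq_iff_nth_eq)
  moreover have "dD (vmap k f \<eta>) = D" by (simp add: vmap_def dD_def \<eta>)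
  ultimately show ?thesis by (simp only: vmap_def[of k g] \<eta>)
qed

lemma kmds_inner_vector:
  assumes "is_kmds k n \<eta>" "i \<in> {1..<k}"
  shows "inner_vector (alpha \<eta> i) (beta \<eta> i)"
proof -
  have "alpha \<eta> i \<noteq> []" "\<forall>x\<in>set (beta \<eta> i). x \<le> Defs.part (alpha \<eta> i) 1"
    "is_partition (alpha \<eta> i)" "is_partition (beta \<eta> i)"
    using assms by (auto simp: is_kmds_def)
  then show ?thesis by (simp add: inner_vector_def part_1)
qed

(* The Durfee conditions only see, for each inner vector, its shape and content, so replacing
   inner vectors by inner vectors of the same content keeps a marked Durfee symbol *)
lemma kmds_replace:
  assumes \<eta>: "is_kmds k n \<eta>" and len: "length (fst (snd \<eta>')) = k" "length (snd (snd \<eta>')) = k"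
    and D: "dD \<eta>' = dD \<eta>" and last: "vec \<eta>' k = vec \<eta> k"
    and inner: "\<And>i. i \<in> {1..<k} \<Longrightarrow> inner_vector (alpha \<eta>' i) (beta \<eta>' i) \<and> content (vec \<eta>' i) = content (vec \<eta> i)"
  shows "is_kmds k n \<eta>'"
proof -
  have same: "content (vec \<eta>' i) = content (vec \<eta> i)" if "i \<in> {1..k}" for i
    using inner last that by (cases "i = k") auto
  have parts: "set (alpha \<eta>' i) \<union> set (beta \<eta>' i) = set (alpha \<eta> i) \<union> set (beta \<eta> i)" if "i \<in> {1..k}" for i
    using arg_cong[OF same[OF that], of set_mset] by (simp add: content_def vec_def)
  have sums: "sum_list (alpha \<eta>' i) + sum_list (beta \<eta>' i) = sum_list (alpha \<eta> i) + sum_list (beta \<eta> i)"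
    if "i \<in> {1..k}" for i
    using arg_cong[OF same[OF that], of sum_mset] by (simp add: content_def vec_def sum_mset_sum_list)
  have largest: "Defs.part (alpha \<eta>' i) 1 = Defs.part (alpha \<eta> i) 1" if i: "i \<in> {1..<k}" for i
    using inner_vector_largest_part inner[OF i] kmds_inner_vector[OF \<eta> i] by (metis vec_def)
  have "is_partition (alpha \<eta>' i) \<and> is_partition (beta \<eta>' i)" if "i \<in> {1..k}" for i
    using inner \<eta> last that by (cases "i = k") (auto simp: inner_vector_def is_kmds_def vec_def)
  moreover have "\<forall>x\<in>set (beta \<eta>' i). x \<le> Defs.part (alpha \<eta>' i) 1" "alpha \<eta>' i \<noteq> []" if "i \<in> {1..<k}" for i
    using inner[OF that] by (auto simp: inner_vector_def part_1)
  moreover have "Defs.part (alpha \<eta>' (i - 1)) 1 \<le> x"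
    if "i \<in> {2..k}" "x \<in> set (alpha \<eta>' i) \<union> set (beta \<eta>' i)" for i x
  proof -
    have i: "i - 1 \<in> {1..<k}" "i \<in> {1..k}" using that(1) by auto
    have "\<forall>y\<in>set (alpha \<eta> i) \<union> set (beta \<eta> i). Defs.part (alpha \<eta> (i - 1)) 1 \<le> y"
      using \<eta> that(1) by (simp add: is_kmds_def)
    then show ?thesis using that(2) parts[OF i(2)] largest[OF i(1)] by auto
  qed
  moreover have "(\<Sum>i=1..k. sum_list (alpha \<eta>' i) + sum_list (beta \<eta>' i)) + (dD \<eta>')\<^sup>2 = n"
    using \<eta> sum.cong[OF refl sums, of "{1..k}"] D by (simp add: is_kmds_def)
  ultimately show ?thesis
    using \<eta> len D last by (simp add: is_kmds_def vec_def)
qed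

lemma vmap_maps:
  assumes \<eta>: "is_kmds k n \<eta>" "\<forall>i\<in>{1..<k}. vec \<eta> i \<in> A i" and k: "1 \<le> k" "f k = id"
    and maps: "\<And>i p. i \<in> {1..<k} \<Longrightarrow> p \<in> A i \<Longrightarrow> f i p \<in> B i \<and> content (f i p) = content p"
    and inner: "\<And>i q. i \<in> {1..<k} \<Longrightarrow> q \<in> B i \<Longrightarrow> inner_vector (fst q) (snd q)"
  shows "is_kmds k n (vmap k f \<eta>) \<and> (\<forall>i\<in>{1..<k}. vec (vmap k f \<eta>) i \<in> B i) \<and> vec (vmap k f \<eta>) k = vec \<eta> k"
proof -
  have inner_vecs: "vec (vmap k f \<eta>) i \<in> B i \<and> content (vec (vmap k f \<eta>) i) = content (vec \<eta> i)"
    if "i \<in> {1..<k}" for i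
    using that maps \<eta>(2) vec_vmap[of i k f \<eta>] by auto
  moreover have last: "vec (vmap k f \<eta>) k = vec \<eta> k" using k vec_vmap[of k k f \<eta>] by simp
  moreover have "is_kmds k n (vmap k f \<eta>)"
  proof (rule kmds_replace[OF \<eta>(1)])
    show "length (fst (snd (vmap k f \<eta>))) = k" "length (snd (snd (vmap k f \<eta>))) = k" "dD (vmap k f \<eta>) = dD \<eta>"
      by (simp_all add: vmap_def dD_def)
    show "inner_vector (alpha (vmap k f \<eta>) i) (beta (vmap k f \<eta>) i) \<and>
          content (vec (vmap k f \<eta>) i) = content (vec \<eta> i)" if "i \<in> {1..<k}" for i
      using inner_vecs[OF that] inner[OF that, of "vec (vmap k f \<eta>) i"] by (simp add: vec_def)
  qed (rule last)
  ultimately show ?thesis by blast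
qed

lemma vmap_bij:
  assumes k: "1 \<le> k" "f k = id"
    and bij: "\<And>i. i \<in> {1..<k} \<Longrightarrow> bij_betw (f i) (A i) (B i)"
    and keep: "\<And>i p. i \<in> {1..<k} \<Longrightarrow> p \<in> A i \<Longrightarrow> content (f i p) = content p"
    and inner: "\<And>i p. i \<in> {1..<k} \<Longrightarrow> p \<in> A i \<union> B i \<Longrightarrow> inner_vector (fst p) (snd p)"
  shows "bij_betw (vmap k f)
    {\<eta>. is_kmds k n \<eta> \<and> (\<forall>i\<in>{1..<k}. vec \<eta> i \<in> A i) \<and> P (vec \<eta> k)}
    {\<eta>. is_kmds k n \<eta> \<and> (\<forall>i\<in>{1..<k}. vec \<eta> i \<in> B i) \<and> P (vec \<eta> k)}"
proof -
  define g where "g i = (if i \<in> {1..<k} then inv_into (A i) (f i) else id)" for i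
  have f: "f i p \<in> B i \<and> content (f i p) = content p \<and> g i (f i p) = p" if "i \<in> {1..<k}" "p \<in> A i" for i p
    using bij[OF that(1)] keep[OF that] that by (auto simp: g_def bij_betw_def inv_into_f_f)
  have g: "g i q \<in> A i \<and> content (g i q) = content q \<and> f i (g i q) = q" if "i \<in> {1..<k}" "q \<in> B i" for i q
  proof -
    have q: "q \<in> f i ` A i" using bij[OF that(1)] that(2) by (simp add: bij_betw_def)
    then have "g i q \<in> A i" "f i (g i q) = q" using that(1) by (simp_all add: g_def inv_into_into f_inv_into_f)
    then show ?thesis using keep[OF that(1)] by metis
  qed
  have "g k = id" by (simp add: g_def)
  have inv: "vmap k g (vmap k f \<eta>) = \<eta>" if "is_kmds k n \<eta>" "\<forall>i\<in>{1..<k}. vec \<eta> i \<in> A i" for \<eta>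
  proof (rule vmap_vmap[OF that(1)])
    fix i assume "i \<in> {1..k}"
    then consider "i \<in> {1..<k}" | "i = k" by fastforce
    then show "g i (f i (vec \<eta> i)) = vec \<eta> i" using f that(2) k(2) \<open>g k = id\<close> by cases auto
  qed
  have inv': "vmap k f (vmap k g \<eta>) = \<eta>" if "is_kmds k n \<eta>" "\<forall>i\<in>{1..<k}. vec \<eta> i \<in> B i" for \<eta>
  proof (rule vmap_vmap[OF that(1)])
    fix i assume "i \<in> {1..k}"
    then consider "i \<in> {1..<k}" | "i = k" by fastforce
    then show "f i (g i (vec \<eta> i)) = vec \<eta> i" using g that(2) k(2) \<open>g k = id\<close> by cases auto
  qed
  show ?thesis
  proof (rule bij_betw_byWitness[where f' = "vmap k g"])
    show "vmap k f ` {\<eta>. is_kmds k n \<eta> \<and> (\<forall>i\<in>{1..<k}. vec \<eta> i \<in> A i) \<and> P (vec \<eta> k)}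
      \<subseteq> {\<eta>. is_kmds k n \<eta> \<and> (\<forall>i\<in>{1..<k}. vec \<eta> i \<in> B i) \<and> P (vec \<eta> k)}"
    proof (rule image_subsetI, clarify)
      fix \<eta> assume "is_kmds k n \<eta>" "\<forall>i\<in>{1..<k}. vec \<eta> i \<in> A i" "P (vec \<eta> k)"
      then show "is_kmds k n (vmap k f \<eta>) \<and> (\<forall>i\<in>{1..<k}. vec (vmap k f \<eta>) i \<in> B i) \<and> P (vec (vmap k f \<eta>) k)"
        using vmap_maps[of k n \<eta> A f B] k f inner by auto
    qed
    show "vmap k g ` {\<eta>. is_kmds k n \<eta> \<and> (\<forall>i\<in>{1..<k}. vec \<eta> i \<in> B i) \<and> P (vec \<eta> k)}
      \<subseteq> {\<eta>. is_kmds k n \<eta> \<and> (\<forall>i\<in>{1..<k}. vec \<eta> i \<in> A i) \<and> P (vec \<eta> k)}"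
    proof (rule image_subsetI, clarify)
      fix \<eta> assume "is_kmds k n \<eta>" "\<forall>i\<in>{1..<k}. vec \<eta> i \<in> B i" "P (vec \<eta> k)"
      then show "is_kmds k n (vmap k g \<eta>) \<and> (\<forall>i\<in>{1..<k}. vec (vmap k g \<eta>) i \<in> A i) \<and> P (vec (vmap k g \<eta>) k)"
        using vmap_maps[of k n \<eta> B g A] k(1) \<open>g k = id\<close> g inner by auto
    qed
  qed (use inv inv' in auto)
qed

lemma rank_nb_iff_ranked:
  assumes "is_kmds k n \<eta>" "i \<in> {1..<k}"
  shows "(rank k \<eta> i = int m \<and> nb k \<eta> i = t) \<longleftrightarrow> vec \<eta> i \<in> ranked_vectors (m + t) t"
proof -
  have v: "inner_vector (alpha \<eta> i) (beta \<eta> i)" by (rule kmds_inner_vector[OF assms])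
  then have "nb k \<eta> i = balanced (alpha \<eta> i) 0 (beta \<eta> i)"
    using assms(2) by (simp add: nb_def balanced_count_eq_balanced inner_vector_def is_partition_def)
  with v assms(2) show ?thesis
    by (auto simp: rank_def ranked_vectors_def ranked_def vectors_def vec_def content_def)
qed

lemma rank_iff_shifted:
  assumes "is_kmds k n \<eta>" "i \<in> {1..<k}"
  shows "(strict_shifted_pair (alpha \<eta> i) (beta \<eta> i) \<and> rank k \<eta> i = int r) \<longleftrightarrow> vec \<eta> i \<in> shifted_vectors r"
  using kmds_inner_vector[OF assms] assms(2)
  by (auto simp: rank_def shifted_vectors_def shifted_def sspairs_def vec_def content_def inner_vector_def)

definition has_rank :: "nat \<Rightarrow> nat list \<times> nat list \<Rightarrow> bool" where
  "has_rank r p \<longleftrightarrow> int (length (fst p)) - int (length (snd p)) = int r"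

lemma rank_last: "rank k \<eta> k = int r \<longleftrightarrow> has_rank r (vec \<eta> k)"
  by (simp add: rank_def vec_def has_rank_def)

lemma ranked_symbols:
  assumes "k \<ge> 1"
  shows "{\<eta>. is_kmds k n \<eta> \<and> (\<forall>i\<in>{1..k}. rank k \<eta> i = int (m i)) \<and> (\<forall>i\<in>{1..<k}. nb k \<eta> i = t i)} =
    {\<eta>. is_kmds k n \<eta> \<and> (\<forall>i\<in>{1..<k}. vec \<eta> i \<in> ranked_vectors (m i + t i) (t i)) \<and> has_rank (m k) (vec \<eta> k)}"
proof (rule Collect_cong)
  fix \<eta>
  have k: "{1..k} = insert k {1..<k}" using assms by auto
  show "is_kmds k n \<eta> \<and> (\<forall>i\<in>{1..k}. rank k \<eta> i = int (m i)) \<and> (\<forall>i\<in>{1..<k}. nb k \<eta> i = t i) \<longleftrightarrow>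
    is_kmds k n \<eta> \<and> (\<forall>i\<in>{1..<k}. vec \<eta> i \<in> ranked_vectors (m i + t i) (t i)) \<and> has_rank (m k) (vec \<eta> k)"
  proof (cases "is_kmds k n \<eta>")
    case True
    have "(\<forall>i\<in>{1..<k}. rank k \<eta> i = int (m i) \<and> nb k \<eta> i = t i) \<longleftrightarrow>
        (\<forall>i\<in>{1..<k}. vec \<eta> i \<in> ranked_vectors (m i + t i) (t i))"
      using rank_nb_iff_ranked[OF True] by blast
    then show ?thesis using True unfolding k by (simp add: rank_last ball_conj_distrib conj_ac)
  qed simp
qed

lemma shifted_symbols:
  "{\<eta>. is_kmds k n \<eta> \<and> strict_shifted k \<eta> \<and> (\<forall>i\<in>{1..<k}. rank k \<eta> i = int (m i + 2 * t i)) \<and> rank k \<eta> k = int (m k)} =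
    {\<eta>. is_kmds k n \<eta> \<and> (\<forall>i\<in>{1..<k}. vec \<eta> i \<in> shifted_vectors (m i + 2 * t i)) \<and> has_rank (m k) (vec \<eta> k)}"
  using rank_iff_shifted rank_last unfolding strict_shifted_def by blast

theorem mainTheorem7:
  fixes k n :: nat and m t :: "nat \<Rightarrow> nat"
  assumes "k \<ge> 1"
  shows "\<exists>f. bij_betw f
     {\<eta>. is_kmds k n \<eta> \<and> (\<forall>i\<in>{1..k}. rank k \<eta> i = int (m i))
                         \<and> (\<forall>i\<in>{1..<k}. nb k \<eta> i = t i)}
     {\<eta>. is_kmds k n \<eta> \<and> strict_shifted k \<eta>
                         \<and> (\<forall>i\<in>{1..<k}. rank k \<eta> i = int (m i + 2 * t i))
                         \<and> rank k \<eta> k = int (m k)}"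
proof -
  define A where "A i = ranked_vectors (m i + t i) (t i)" for i
  define B where "B i = shifted_vectors (m i + 2 * t i)" for i
  have "\<forall>i. \<exists>g. bij_betw g (A i) (B i) \<and> (\<forall>p\<in>A i. content (g p) = content p)"
    unfolding A_def B_def using ranked_shifted_bij by (metis add.assoc mult_2)
  then obtain F where F: "\<And>i. bij_betw (F i) (A i) (B i) \<and> (\<forall>p\<in>A i. content (F i p) = content p)"
    by (auto dest!: choice)
  define f where "f i = (if i < k then F i else id)" for i
  have "bij_betw (vmap k f)
    {\<eta>. is_kmds k n \<eta> \<and> (\<forall>i\<in>{1..<k}. vec \<eta> i \<in> A i) \<and> has_rank (m k) (vec \<eta> k)}
    {\<eta>. is_kmds k n \<eta> \<and> (\<forall>i\<in>{1..<k}. vec \<eta> i \<in> B i) \<and> has_rank (m k) (vec \<eta> k)}"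
  proof (rule vmap_bij[OF assms])
    show "f k = id" by (simp add: f_def)
    show "bij_betw (f i) (A i) (B i)" if "i \<in> {1..<k}" for i using F that by (simp add: f_def)
    show "content (f i p) = content p" if "i \<in> {1..<k}" "p \<in> A i" for i p using F that by (simp add: f_def)
    show "inner_vector (fst p) (snd p)" if "p \<in> A i \<union> B i" for i p
      using that ranked_vectors_inner shifted_vectors_inner by (auto simp: A_def B_def)
  qed
  then show ?thesis unfolding ranked_symbols[OF assms] shifted_symbols A_def B_def by blast
qed

end
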